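(* Let $K$ be a differential field of characteristic zero with a set $\Delta=\{\partial_1,\ldots,\partial_m\}$ of pairwise commuting derivations, let $R=K\{y_1,\ldots,y_n\}$, let $l\geqslant 0$, and let $J\subseteq R_l$ be an ideal. Let $p>0$ be an integer such that $(J')^p\subseteq J^{(1)}$. Then, for all integers $k\geqslant 0$, $$\sqrt{J'^{(k)}}\subseteq \sqrt{J^{(kp+1)}},$$ where the left radical is taken in $R_{l+k}$, the right radical in $R_{l+kp+1}$, and the inclusion is as subsets of $R$.
   Context: Let $\Theta=\{\partial_1^{i_1}\cdots\partial_m^{i_m} : i_j\geqslant 0\}$ and, for $\theta=\partial_1^{i_1}\cdots\partial_m^{i_m}$, let $\operatorname{ord}\theta=i_1+\cdots+i_m$. The ring of differential polynomials is $R=K\{y_1,\ldots,y_n\}=K[\theta y_i : \theta\in\Theta,\ 1\leqslant i\leqslant n]$ (a polynomial ring in the infinitely many variables $\theta y_i$, with the derivations extended by $\partial_j(\theta y_i)=(\partial_j\theta)y_i$), and for $h\geqslant 0$, $R_h=K[\theta y_i : 1\leqslant i\leqslant n,\ \operatorname{ord}\theta\leqslant h]$. For an ideal $J\subseteq R_l$ and $k\geqslant 0$, $J^{(k)}$ denotes the ideal of $R_{l+k}$ generated by $\{\theta g : g\in J,\ \theta\in\Theta,\ \operatorname{ord}\theta\leqslant k\}$. For an ideal $J\subseteq R_l$, $J'$ denotes $\sqrt{J^{(1)}}\cap R_l$, i.e. the radical in $R_{l+1}$ of the ideal generated by $\{\theta g: g\in J,\ \operatorname{ord}\theta\leqslant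 1\}$, intersected with $R_l$; $J'$ is an ideal of $R_l$, so $J'^{(k)}$ is an ideal of $R_{l+k}$. $(J')^p$ denotes the $p$-th power of the ideal $J'$. *)

theory Defs
  imports Main "HOL-Library.Poly_Mapping"
begin

text \<open>Differential polynomials over a differential field K with derivations
  indexed by the finite type 'm (so m = CARD('m)) in differential indeterminates
  indexed by the finite type 'n (so n = CARD('n)).
  A derivative operator theta = d_1^i_1 ... d_m^i_m is a function 'm => nat;
  the variable theta y_i is the pair (theta, i).
  R = K{y} is the polynomial ring (monomials => coefficients) in these variables.\<close>

type_synonym ('m, 'n) dvar = "('m \<Rightarrow> nat) \<times> 'n"
type_synonym ('k, 'm, 'n) dpoly = "((('m, 'n) dvar) \<Rightarrow>\<^sub>0 nat) \<Rightarrow>\<^sub>0 'k"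

definition diff_field :: "('m \<Rightarrow> 'k::field \<Rightarrow> 'k) \<Rightarrow> bool" where
  "diff_field D \<longleftrightarrow>
     (\<forall>j a b. D j (a + b) = D j a + D j b) \<and>
     (\<forall>j a b. D j (a * b) = D j a * b + a * D j b) \<and>
     (\<forall>i j a. D i (D j a) = D j (D i a))"

definition ord_op :: "('m::finite \<Rightarrow> nat) \<Rightarrow> nat" where
  "ord_op \<theta> = (\<Sum>j\<in>UNIV. \<theta> j)"

definition dshift :: "'m \<Rightarrow> ('m, 'n) dvar \<Rightarrow> ('m, 'n) dvar" where
  "dshift j v = ((fst v)(j := fst v j + 1), snd v)"

text \<open>Extension of the derivation D j of K to R (coefficients are differentiated,
  and the Leibniz rule is applied to monomials).\<close>
definition dderiv :: "('m \<Rightarrow> 'k::field \<Rightarrow> 'k) \<Rightarrow> 'm \<Rightarrow> ('k, 'm, 'n) dpoly \<Rightarrow> ('k, 'm, 'n) dpoly" where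
  "dderiv D j p =
     (\<Sum>(mon::('m, 'n) dvar \<Rightarrow>\<^sub>0 nat)\<in>Poly_Mapping.keys p.
        Poly_Mapping.single mon (D j (Poly_Mapping.lookup p mon)) +
        (\<Sum>v\<in>Poly_Mapping.keys mon.
           Poly_Mapping.single (mon - Poly_Mapping.single v 1 + Poly_Mapping.single (dshift j v) 1)
             (of_nat (Poly_Mapping.lookup mon v) * Poly_Mapping.lookup p mon)))"

text \<open>theta g for theta = d_{j_1} ... d_{j_r}, given as the list of directions
  (the derivations commute, so only the multiset of directions matters;
  ord theta = length of the list).\<close>
definition dapply :: "('m \<Rightarrow> 'k::field \<Rightarrow> 'k) \<Rightarrow> 'm list \<Rightarrow> ('k, 'm, 'n) dpoly \<Rightarrow> ('k, 'm, 'n) dpoly" where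
  "dapply D js p = fold (dderiv D) js p"

definition Rh :: "nat \<Rightarrow> ('k::field, 'm::finite, 'n) dpoly set" where
  "Rh h = {p. \<forall>mon\<in>Poly_Mapping.keys p. \<forall>v\<in>Poly_Mapping.keys mon. ord_op (fst v) \<le> h}"

definition is_ideal_in :: "'a::comm_ring_1 set \<Rightarrow> 'a set \<Rightarrow> bool" where
  "is_ideal_in A I \<longleftrightarrow> I \<subseteq> A \<and> 0 \<in> I \<and> (\<forall>x\<in>I. \<forall>y\<in>I. x + y \<in> I) \<and>
     (\<forall>r\<in>A. \<forall>x\<in>I. r * x \<in> I)"

definition gen_ideal :: "'a::comm_ring_1 set \<Rightarrow> 'a set \<Rightarrow> 'a set" where
  "gen_ideal A S = {x. \<exists>F r. finite F \<and> F \<subseteq> S \<and> (\<forall>s\<in>F. r s \<in> A) \<and> x = (\<Sum>s\<in>F. r s * s)}"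

definition radical_in :: "'a::comm_ring_1 set \<Rightarrow> 'a set \<Rightarrow> 'a set" where
  "radical_in A I = {x\<in>A. \<exists>k>0. x ^ k \<in> I}"

definition ideal_power_in :: "'a::comm_ring_1 set \<Rightarrow> 'a set \<Rightarrow> nat \<Rightarrow> 'a set" where
  "ideal_power_in A I p = gen_ideal A {prod_list xs | xs. length xs = p \<and> set xs \<subseteq> I}"

definition prolong :: "('m \<Rightarrow> 'k::field \<Rightarrow> 'k) \<Rightarrow> nat \<Rightarrow> ('k, 'm::finite, 'n) dpoly set \<Rightarrow> nat
    \<Rightarrow> ('k, 'm, 'n) dpoly set" where
  "prolong D l J k = gen_ideal (Rh (l + k)) {dapply D js g | js g. g \<in> J \<and> length js \<le> k}"

definition dprime :: "('m \<Rightarrow> 'k::field \<Rightarrow> 'k) \<Rightarrow> nat \<Rightarrow> ('k, 'm::finite, 'n) dpoly set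
    \<Rightarrow> ('k, 'm, 'n) dpoly set" where
  "dprime D l J = radical_in (Rh (l + 1)) (prolong D l J 1) \<inter> Rh l"

end

theory Submission
  imports Defs "HOL-Library.Multiset_Order"
begin

text \<open>Let P be the radical of J^(kp+1) in R_(l+kp+1). As P is a radical ideal, it suffices
  to show \<theta>f \<in> P for f \<in> J' and ord \<theta> \<le> k. For ord \<theta> = k, apply \<theta>^p, of order kp, to
  f^p \<in> J^(1): by the Leibniz rule, the result, an element of J^(kp+1), is N (\<theta>f)^p with N > 0
  plus products \<theta>_1 f \<cdots> \<theta>_p f with \<theta>_1 \<cdots> \<theta>_p = \<theta>^p and not all \<theta>_i = \<theta>. Order the
  operators of order k linearly and compatibly with composition. Then every such product has a
  factor \<theta>_i f with ord \<theta>_i < k, or with ord \<theta>_i = k and \<theta>_i < \<theta>, which lies in P by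
  induction. Hence N (\<theta>f)^p \<in> P, and \<theta>f \<in> P since K has characteristic zero.\<close>

section \<open>The derivations of a ring of differential polynomials\<close>

lemma diff_field_add: "diff_field D \<Longrightarrow> D j (a + b) = D j a + D j b"
  and diff_field_mult: "diff_field D \<Longrightarrow> D j (a * b) = D j a * b + a * D j b"
  and diff_field_commute: "diff_field D \<Longrightarrow> D i (D j a) = D j (D i a)"
  unfolding diff_field_def by blast+

lemma diff_field_0: "diff_field D \<Longrightarrow> D j 0 = 0"
  using diff_field_add[of D j 0 0] unfolding add_0_right add_cancel_right_right .

lemma diff_field_1: "diff_field D \<Longrightarrow> D j 1 = 0"
  using diff_field_mult[of D j 1 1] unfolding mult_1_left mult_1_right add_cancel_right_right .

abbreviation dshift_monom :: "'m \<Rightarrow> (('m, 'n) dvar \<Rightarrow>\<^sub>0 nat) \<Rightarrow> ('m, 'n) dvar \<Rightarrow> ('m, 'n) dvar \<Rightarrow>\<^sub>0 nat" where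
  "dshift_monom j mon v \<equiv> mon - Poly_Mapping.single v 1 + Poly_Mapping.single (dshift j v) 1"

definition dderiv_term :: "('m \<Rightarrow> 'k::field \<Rightarrow> 'k) \<Rightarrow> 'm \<Rightarrow> (('m, 'n) dvar \<Rightarrow>\<^sub>0 nat) \<Rightarrow> 'k \<Rightarrow> ('k, 'm, 'n) dpoly" where
  "dderiv_term D j mon c = Poly_Mapping.single mon (D j c) +
     (\<Sum>v\<in>Poly_Mapping.keys mon.
        Poly_Mapping.single (dshift_monom j mon v) (of_nat (Poly_Mapping.lookup mon v) * c))"

lemma dderiv_eq_sum_dderiv_term:
  "dderiv D j p = (\<Sum>mon\<in>Poly_Mapping.keys p. dderiv_term D j mon (Poly_Mapping.lookup p mon))"
  unfolding dderiv_def dderiv_term_def ..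

lemma dderiv_term_0: "diff_field D \<Longrightarrow> dderiv_term D j mon 0 = 0"
  by (simp add: dderiv_term_def diff_field_0)

lemma dderiv_term_add:
  "diff_field D \<Longrightarrow> dderiv_term D j mon (a + b) = dderiv_term D j mon a + dderiv_term D j mon b"
  by (simp add: dderiv_term_def diff_field_add single_add distrib_left sum.distrib algebra_simps)

lemma dderiv_eq_sum_dderiv_term_superset:
  assumes "diff_field D" "finite S" "Poly_Mapping.keys p \<subseteq> S"
  shows "dderiv D j p = (\<Sum>mon\<in>S. dderiv_term D j mon (Poly_Mapping.lookup p mon))"
  unfolding dderiv_eq_sum_dderiv_term
  by (rule sum.mono_neutral_left) (use assms in \<open>auto simp: dderiv_term_0 in_keys_iff\<close>)

lemma dderiv_single: "diff_field D \<Longrightarrow> dderiv D j (Poly_Mapping.single mon c) = dderiv_term D j mon c"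
  by (subst dderiv_eq_sum_dderiv_term_superset[of D "{mon}"]) auto

lemma dderiv_0: "dderiv D j 0 = 0"
  by (simp add: dderiv_def)

lemma dderiv_add:
  assumes "diff_field D"
  shows "dderiv D j (p + q) = dderiv D j p + dderiv D j q"
proof -
  let ?S = "Poly_Mapping.keys p \<union> Poly_Mapping.keys q"
  have "dderiv D j (p + q) = (\<Sum>mon\<in>?S. dderiv_term D j mon (Poly_Mapping.lookup (p + q) mon))"
    using keys_add[of p q] by (intro dderiv_eq_sum_dderiv_term_superset assms) auto
  also have "\<dots> = (\<Sum>mon\<in>?S. dderiv_term D j mon (Poly_Mapping.lookup p mon))
                + (\<Sum>mon\<in>?S. dderiv_term D j mon (Poly_Mapping.lookup q mon))"
    by (simp add: lookup_add dderiv_term_add[OF assms] sum.distrib)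
  also have "\<dots> = dderiv D j p + dderiv D j q"
    by (subst (1 2) dderiv_eq_sum_dderiv_term_superset[OF assms]) auto
  finally show ?thesis .
qed

lemma dderiv_sum: "diff_field D \<Longrightarrow> dderiv D j (\<Sum>i\<in>A. f i) = (\<Sum>i\<in>A. dderiv D j (f i))"
  by (induction A rule: infinite_finite_induct) (auto simp: dderiv_0 dderiv_add)

lemma poly_mapping_sum_single:
  "p = (\<Sum>m\<in>Poly_Mapping.keys p. Poly_Mapping.single m (Poly_Mapping.lookup p m))"
  by (rule poly_mapping_eqI)
    (simp add: lookup_sum lookup_single when_def in_keys_iff sum.delta' split: if_splits)

lemma dshift_monom_add:
  "v \<in> Poly_Mapping.keys m \<Longrightarrow> dshift_monom j m v + n = dshift_monom j (m + n) v"
  by (rule poly_mapping_eqI) (auto simp: lookup_add lookup_minus lookup_single when_def in_keys_iff)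

lemma keys_add_nat:
  "Poly_Mapping.keys ((m :: 'a \<Rightarrow>\<^sub>0 nat) + n) = Poly_Mapping.keys m \<union> Poly_Mapping.keys n"
  by (auto simp: in_keys_iff lookup_add)

lemma dderiv_term_mult:
  assumes "diff_field D"
  shows "dderiv_term D j (m + n) (a * b)
       = dderiv_term D j m a * Poly_Mapping.single n b + Poly_Mapping.single m a * dderiv_term D j n b"
proof -
  let ?t = "\<lambda>v c. Poly_Mapping.single (dshift_monom j (m + n) v) (of_nat c * (a * b))"
  have left: "(\<Sum>v\<in>Poly_Mapping.keys m.
        Poly_Mapping.single (dshift_monom j m v) (of_nat (Poly_Mapping.lookup m v) * a)) * Poly_Mapping.single n b
      = (\<Sum>v\<in>Poly_Mapping.keys m. ?t v (Poly_Mapping.lookup m v))"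
    unfolding sum_distrib_right mult_single
    by (rule sum.cong[OF refl], subst dshift_monom_add, assumption, simp add: mult.assoc)
  have right: "Poly_Mapping.single m a * (\<Sum>v\<in>Poly_Mapping.keys n.
        Poly_Mapping.single (dshift_monom j n v) (of_nat (Poly_Mapping.lookup n v) * b))
      = (\<Sum>v\<in>Poly_Mapping.keys n. ?t v (Poly_Mapping.lookup n v))"
    unfolding sum_distrib_left mult_single
    by (rule sum.cong[OF refl], subst add.commute, subst dshift_monom_add, assumption)
      (simp add: add.commute mult.commute mult.left_commute mult.assoc)
  have "(\<Sum>v\<in>Poly_Mapping.keys (m + n). ?t v (Poly_Mapping.lookup (m + n) v))
      = (\<Sum>v\<in>Poly_Mapping.keys (m + n). ?t v (Poly_Mapping.lookup m v))
      + (\<Sum>v\<in>Poly_Mapping.keys (m + n). ?t v (Poly_Mapping.lookup n v))"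
    by (simp add: lookup_add distrib_right single_add sum.distrib)
  also have "\<dots> = (\<Sum>v\<in>Poly_Mapping.keys m. ?t v (Poly_Mapping.lookup m v))
      + (\<Sum>v\<in>Poly_Mapping.keys n. ?t v (Poly_Mapping.lookup n v))"
    by (intro arg_cong2[where f = "(+)"] sum.mono_neutral_right) (auto simp: keys_add_nat in_keys_iff)
  finally have middle: "(\<Sum>v\<in>Poly_Mapping.keys (m + n). ?t v (Poly_Mapping.lookup (m + n) v))
      = (\<Sum>v\<in>Poly_Mapping.keys m. ?t v (Poly_Mapping.lookup m v))
      + (\<Sum>v\<in>Poly_Mapping.keys n. ?t v (Poly_Mapping.lookup n v))" .
  show ?thesis
    unfolding dderiv_term_def distrib_right distrib_left left right middle mult_single
    by (simp add: diff_field_mult[OF assms] single_add mult.commute)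
qed

lemma dderiv_mult:
  assumes "diff_field D"
  shows "dderiv D j (p * q) = dderiv D j p * q + p * dderiv D j q"
proof -
  let ?P = "\<lambda>m. Poly_Mapping.single m (Poly_Mapping.lookup p m)"
  let ?Q = "\<lambda>m. Poly_Mapping.single m (Poly_Mapping.lookup q m)"
  have pq: "p * q = (\<Sum>m\<in>Poly_Mapping.keys p. \<Sum>n\<in>Poly_Mapping.keys q. ?P m * ?Q n)"
    by (subst (1 2) poly_mapping_sum_single) (simp add: sum_product)
  have dp: "dderiv D j p = (\<Sum>m\<in>Poly_Mapping.keys p. dderiv D j (?P m))"
    by (subst poly_mapping_sum_single) (simp add: dderiv_sum[OF assms])
  have dq: "dderiv D j q = (\<Sum>n\<in>Poly_Mapping.keys q. dderiv D j (?Q n))"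
    by (subst poly_mapping_sum_single) (simp add: dderiv_sum[OF assms])
  have "dderiv D j (p * q) = (\<Sum>m\<in>Poly_Mapping.keys p. \<Sum>n\<in>Poly_Mapping.keys q.
      dderiv D j (?P m) * ?Q n + ?P m * dderiv D j (?Q n))"
    unfolding pq
    by (simp add: dderiv_sum[OF assms] mult_single dderiv_single[OF assms] dderiv_term_mult[OF assms])
  also have "\<dots> = dderiv D j p * q + p * dderiv D j q"
    unfolding dp dq by (subst (3 4) poly_mapping_sum_single) (simp add: sum.distrib sum_product)
  finally show ?thesis .
qed

lemma dderiv_const:
  "diff_field D \<Longrightarrow> dderiv D j (Poly_Mapping.single 0 c) = Poly_Mapping.single 0 (D j c)"
  by (simp add: dderiv_single dderiv_term_def)

lemma dderiv_1: "diff_field D \<Longrightarrow> dderiv D j 1 = 0"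
  using dderiv_const[of D j 1] by (simp add: diff_field_1)

lemma dderiv_var:
  "diff_field D \<Longrightarrow> dderiv D j (Poly_Mapping.single (Poly_Mapping.single v 1) 1)
     = Poly_Mapping.single (Poly_Mapping.single (dshift j v) 1) 1"
  by (simp add: dderiv_single dderiv_term_def diff_field_1)

lemma single_single_power:
  "Poly_Mapping.single (Poly_Mapping.single a (1::nat)) (1::'k::comm_ring_1) ^ b
     = Poly_Mapping.single (Poly_Mapping.single a b) 1"
  by (induction b) (simp_all add: mult_single single_add[symmetric] add.commute)

lemma update_eq_add_single:
  "a \<notin> Poly_Mapping.keys f \<Longrightarrow> Poly_Mapping.update a b f = f + Poly_Mapping.single a b"
  by (rule poly_mapping_eqI) (auto simp: lookup_update lookup_add lookup_single when_def in_keys_iff)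

lemma derivation_eq_0:
  fixes \<delta> :: "('k::comm_ring_1, 'm, 'n) dpoly \<Rightarrow> ('k, 'm, 'n) dpoly"
  assumes add: "\<And>p q. \<delta> (p + q) = \<delta> p + \<delta> q"
    and mult: "\<And>p q. \<delta> (p * q) = \<delta> p * q + p * \<delta> q"
    and const: "\<And>c. \<delta> (Poly_Mapping.single 0 c) = 0"
    and var: "\<And>v. \<delta> (Poly_Mapping.single (Poly_Mapping.single v 1) 1) = 0"
  shows "\<delta> p = 0"
proof -
  have sum: "\<delta> (sum f A) = (\<Sum>i\<in>A. \<delta> (f i))" for f and A :: "'x set"
    by (induction A rule: infinite_finite_induct) (use add[of 0 0] in \<open>auto simp: add\<close>)
  have one: "\<delta> 1 = 0"
    using const[of 1] by simp
  have power: "\<delta> x = 0 \<Longrightarrow> \<delta> (x ^ b) = 0" for x b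
    by (induction b) (auto simp: mult one)
  have monomial: "\<delta> (Poly_Mapping.single m 1) = 0" for m
  proof (induction m rule: update_induct)
    case const
    then show ?case using one by simp
  next
    case (update f a b)
    have "Poly_Mapping.single (Poly_Mapping.update a b f) (1::'k)
        = Poly_Mapping.single f 1 * Poly_Mapping.single (Poly_Mapping.single a 1) 1 ^ b"
      unfolding update_eq_add_single[OF update(1)] single_single_power mult_single by simp
    then show ?case using update(3) power[OF var] by (simp only: mult) simp
  qed
  have "\<delta> (Poly_Mapping.single m c) = 0" for m c
    using mult[of "Poly_Mapping.single 0 c" "Poly_Mapping.single m 1"]
    by (simp add: mult_single const monomial)
  then show ?thesis
    by (subst poly_mapping_sum_single) (simp add: sum)
qed

lemma dshift_commute: "dshift i (dshift j v) = dshift j (dshift i v)"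
  by (cases "i = j") (auto simp: dshift_def fun_upd_twist)

lemma dderiv_commute:
  fixes D :: "'m \<Rightarrow> 'k::field \<Rightarrow> 'k" and p :: "('k, 'm, 'n) dpoly"
  assumes "diff_field D"
  shows "dderiv D i (dderiv D j p) = dderiv D j (dderiv D i p)"
proof -
  let ?\<delta> = "\<lambda>p. dderiv D i (dderiv D j p) - dderiv D j (dderiv D i p)"
  have "?\<delta> p = 0"
  proof (rule derivation_eq_0[where \<delta> = ?\<delta>])
    show "?\<delta> (p + q) = ?\<delta> p + ?\<delta> q" for p q :: "('k, 'm, 'n) dpoly"
      by (simp add: dderiv_add[OF assms])
    show "?\<delta> (p * q) = ?\<delta> p * q + p * ?\<delta> q" for p q :: "('k, 'm, 'n) dpoly"
      by (simp add: dderiv_add[OF assms] dderiv_mult[OF assms] algebra_simps)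
    show "?\<delta> (Poly_Mapping.single 0 c) = 0" for c
      by (simp add: dderiv_const[OF assms] diff_field_commute[OF assms])
    show "?\<delta> (Poly_Mapping.single (Poly_Mapping.single v 1) 1) = 0" for v
      by (simp only: dderiv_var[OF assms] dshift_commute) simp
  qed
  then show ?thesis by simp
qed

lemma dapply_Nil [simp]: "dapply D [] p = p"
  by (simp add: dapply_def)

lemma dapply_snoc: "dapply D (js @ [j]) p = dderiv D j (dapply D js p)"
  by (simp add: dapply_def)

lemma dapply_mset_cong:
  assumes "diff_field D" "mset js = mset js'"
  shows "dapply D js p = dapply D js' p"
  unfolding dapply_def
  by (subst fold_multiset_equiv[OF _ assms(2)]) (auto simp: fun_eq_iff dderiv_commute[OF assms(1)])

lemma dderiv_prod:
  fixes q :: nat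
  assumes "diff_field D"
  shows "dderiv D j (\<Prod>i<q. F i) = (\<Sum>c<q. \<Prod>i<q. if i = c then dderiv D j (F i) else F i)"
proof (induction q)
  case 0
  then show ?case by (simp add: dderiv_1[OF assms])
next
  case (Suc q)
  have "dderiv D j (\<Prod>i<Suc q. F i)
      = (\<Sum>c<q. \<Prod>i<q. if i = c then dderiv D j (F i) else F i) * F q + (\<Prod>i<q. F i) * dderiv D j (F q)"
    by (simp add: dderiv_mult[OF assms] Suc.IH)
  also have "\<dots> = (\<Sum>c<Suc q. \<Prod>i<Suc q. if i = c then dderiv D j (F i) else F i)"
    by (simp add: sum_distrib_right)
  finally show ?case .
qed

text \<open>The terms of the Leibniz rule for \<theta>(F_0 \<cdots> F_(q-1)) are indexed by the colourings cs
  of the positions of the list js of directions of \<theta> with q colours: the factor F_i receives the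
  directions of colour i.\<close>

definition colour_class :: "'a list \<Rightarrow> nat list \<Rightarrow> nat \<Rightarrow> 'a list" where
  "colour_class js cs i = map fst (filter (\<lambda>x. snd x = i) (zip js cs))"

definition colourings :: "nat \<Rightarrow> nat \<Rightarrow> nat list set" where
  "colourings n q = {cs. set cs \<subseteq> {..<q} \<and> length cs = n}"

lemma finite_colourings: "finite (colourings n q)"
  unfolding colourings_def by (rule finite_lists_length_eq) simp

lemma colourings_0: "colourings 0 q = {[]}"
  by (auto simp: colourings_def)

lemma colour_class_Nil [simp]: "colour_class [] cs i = []"
  by (simp add: colour_class_def)

lemma colour_class_Cons:
  "colour_class (j # js) (c # cs) i = (if c = i then j # colour_class js cs i else colour_class js cs i)"
  by (simp add: colour_class_def)

lemma colour_class_append: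
  "length js = length cs \<Longrightarrow> colour_class (js @ js') (cs @ cs') i = colour_class js cs i @ colour_class js' cs' i"
  by (simp add: colour_class_def)

lemma length_colour_class_le: "length (colour_class js cs i) \<le> length js"
  unfolding colour_class_def
  by (metis length_filter_le length_map length_zip min.bounded_iff order_refl order_trans)

lemma sum_colourings_Suc:
  "(\<Sum>cs\<in>colourings (Suc n) q. g cs) = (\<Sum>cs\<in>colourings n q. \<Sum>c<q. g (cs @ [c]))"
proof -
  have "colourings (Suc n) q = (\<lambda>(cs, c). cs @ [c]) ` (colourings n q \<times> {..<q})"
  proof (intro equalityI subsetI)
    fix cs assume cs: "cs \<in> colourings (Suc n) q"
    then have "cs \<noteq> []"
      by (auto simp: colourings_def)
    with cs have "butlast cs \<in> colourings n q" "last cs \<in> {..<q}"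
      unfolding colourings_def by (auto dest: in_set_butlastD) (metis last_in_set lessThan_iff subsetD)
    moreover have "cs = butlast cs @ [last cs]"
      using \<open>cs \<noteq> []\<close> by simp
    ultimately show "cs \<in> (\<lambda>(cs, c). cs @ [c]) ` (colourings n q \<times> {..<q})"
      by (metis (no_types, lifting) SigmaI case_prod_conv image_eqI)
  qed (auto simp: colourings_def)
  moreover have "inj_on (\<lambda>(cs, c). cs @ [c]) (colourings n q \<times> {..<q})"
    by (auto simp: inj_on_def)
  ultimately show ?thesis
    by (simp add: sum.reindex sum.cartesian_product split_def)
qed

lemma dapply_prod:
  assumes "diff_field D"
  shows "dapply D js (\<Prod>i<q. F i)
       = (\<Sum>cs\<in>colourings (length js) q. \<Prod>i<q. dapply D (colour_class js cs i) (F i))"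
proof (induction js rule: rev_induct)
  case Nil
  then show ?case by (simp add: colourings_0)
next
  case (snoc j js)
  have "dapply D (js @ [j]) (\<Prod>i<q. F i) = (\<Sum>cs\<in>colourings (length js) q. \<Sum>c<q. \<Prod>i<q.
      if i = c then dderiv D j (dapply D (colour_class js cs i) (F i)) else dapply D (colour_class js cs i) (F i))"
    by (simp add: dapply_snoc snoc.IH dderiv_sum[OF assms] dderiv_prod[OF assms])
  also have "\<dots> = (\<Sum>cs\<in>colourings (length js) q. \<Sum>c<q. \<Prod>i<q.
      dapply D (colour_class (js @ [j]) (cs @ [c]) i) (F i))"
    by (intro sum.cong refl prod.cong)
      (simp add: colourings_def colour_class_append colour_class_Cons dapply_snoc)
  finally show ?case
    by (simp add: sum_colourings_Suc)
qed

section \<open>Ideals of subrings\<close>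

definition subring :: "'a::comm_ring_1 set \<Rightarrow> bool" where
  "subring A \<longleftrightarrow> 0 \<in> A \<and> 1 \<in> A \<and> (\<forall>x\<in>A. \<forall>y\<in>A. x + y \<in> A \<and> x * y \<in> A) \<and> (\<forall>x\<in>A. - x \<in> A)"

lemma subring_0: "subring A \<Longrightarrow> 0 \<in> A"
  and subring_1: "subring A \<Longrightarrow> 1 \<in> A"
  and subring_add: "subring A \<Longrightarrow> x \<in> A \<Longrightarrow> y \<in> A \<Longrightarrow> x + y \<in> A"
  and subring_mult: "subring A \<Longrightarrow> x \<in> A \<Longrightarrow> y \<in> A \<Longrightarrow> x * y \<in> A"
  and subring_uminus: "subring A \<Longrightarrow> x \<in> A \<Longrightarrow> - x \<in> A"
  by (auto simp: subring_def)

lemma subring_power: "subring A \<Longrightarrow> x \<in> A \<Longrightarrow> x ^ n \<in> A"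
  by (induction n) (auto intro: subring_1 subring_mult)

lemma subring_of_nat: "subring A \<Longrightarrow> of_nat n \<in> A"
  by (induction n) (auto intro: subring_0 subring_1 subring_add)

lemma subring_prod: "subring A \<Longrightarrow> (\<And>i. i \<in> S \<Longrightarrow> f i \<in> A) \<Longrightarrow> prod f S \<in> A"
  by (induction S rule: infinite_finite_induct) (auto intro: subring_1 subring_mult)

lemma ideal_subset: "is_ideal_in A I \<Longrightarrow> I \<subseteq> A"
  and ideal_0: "is_ideal_in A I \<Longrightarrow> 0 \<in> I"
  and ideal_add: "is_ideal_in A I \<Longrightarrow> x \<in> I \<Longrightarrow> y \<in> I \<Longrightarrow> x + y \<in> I"
  and ideal_mult_left: "is_ideal_in A I \<Longrightarrow> r \<in> A \<Longrightarrow> x \<in> I \<Longrightarrow> r * x \<in> I"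
  by (auto simp: is_ideal_in_def)

lemma ideal_mult_right: "is_ideal_in A I \<Longrightarrow> r \<in> A \<Longrightarrow> x \<in> I \<Longrightarrow> x * r \<in> I"
  using ideal_mult_left by (metis mult.commute)

lemma ideal_sum: "is_ideal_in A I \<Longrightarrow> (\<And>i. i \<in> S \<Longrightarrow> f i \<in> I) \<Longrightarrow> sum f S \<in> I"
  by (induction S rule: infinite_finite_induct) (auto intro: ideal_0 ideal_add)

lemma ideal_diff:
  assumes "subring A" "is_ideal_in A I" "x \<in> I" "y \<in> I"
  shows "x - y \<in> I"
proof -
  have "(- 1) * y \<in> I"
    using assms by (intro ideal_mult_left subring_uminus subring_1)
  then show ?thesis
    using ideal_add[OF assms(2,3), of "- y"] by simp
qed

lemma ideal_prod:
  assumes "subring A" "is_ideal_in A I" "finite S" "i \<in> S" "f i \<in> I" "\<And>i. i \<in> S \<Longrightarrow> f i \<in> A"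
  shows "prod f S \<in> I"
proof -
  have "prod f (S - {i}) \<in> A"
    using assms by (intro subring_prod) auto
  then have "f i * prod f (S - {i}) \<in> I"
    by (rule ideal_mult_right[OF assms(2) _ assms(5)])
  then show ?thesis
    by (simp add: prod.remove[OF assms(3,4)])
qed

lemma subring_ideal_self: "subring A \<Longrightarrow> is_ideal_in A A"
  by (auto simp: is_ideal_in_def subring_def)

lemma gen_ideal_least:
  assumes "is_ideal_in A I" "S \<subseteq> I"
  shows "gen_ideal A S \<subseteq> I"
proof
  fix x assume "x \<in> gen_ideal A S"
  then obtain F r where "F \<subseteq> S" "\<forall>s\<in>F. r s \<in> A" "x = (\<Sum>s\<in>F. r s * s)"
    unfolding gen_ideal_def by blast
  then show "x \<in> I"
    using assms(2) by (simp, intro ideal_sum[OF assms(1)] ideal_mult_left[OF assms(1)]) auto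
qed

lemma gen_ideal_subset: "subring A \<Longrightarrow> S \<subseteq> A \<Longrightarrow> gen_ideal A S \<subseteq> A"
  by (rule gen_ideal_least[OF subring_ideal_self])

lemma gen_ideal_superset: "subring A \<Longrightarrow> S \<subseteq> gen_ideal A S"
proof
  fix s assume "subring A" "s \<in> S"
  then have "(\<Sum>t\<in>{s}. 1 * t) \<in> gen_ideal A S"
    unfolding gen_ideal_def by (intro CollectI exI[of _ "{s}"] exI[of _ "\<lambda>_. 1"]) (auto intro: subring_1)
  then show "s \<in> gen_ideal A S" by simp
qed

lemma gen_ideal_mono:
  assumes "A \<subseteq> B" "S \<subseteq> T"
  shows "gen_ideal A S \<subseteq> gen_ideal B T"
proof
  fix x assume "x \<in> gen_ideal A S"
  then obtain F r where "finite F" "F \<subseteq> S" "\<forall>s\<in>F. r s \<in> A" "x = (\<Sum>s\<in>F. r s * s)"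
    unfolding gen_ideal_def by blast
  then show "x \<in> gen_ideal B T"
    unfolding gen_ideal_def using assms by (intro CollectI exI[of _ F] exI[of _ r]) auto
qed

lemma gen_ideal_ideal:
  assumes A: "subring A" and S: "S \<subseteq> A"
  shows "is_ideal_in A (gen_ideal A S)"
  unfolding is_ideal_in_def
proof (intro conjI ballI)
  show "gen_ideal A S \<subseteq> A"
    by (rule gen_ideal_subset[OF A S])
  show "0 \<in> gen_ideal A S"
    unfolding gen_ideal_def by (intro CollectI exI[of _ "{}"]) auto
next
  fix x y assume "x \<in> gen_ideal A S" "y \<in> gen_ideal A S"
  then obtain F r G r' where F: "finite F" "F \<subseteq> S" "\<forall>s\<in>F. r s \<in> A" "x = (\<Sum>s\<in>F. r s * s)"
    and G: "finite G" "G \<subseteq> S" "\<forall>s\<in>G. r' s \<in> A" "y = (\<Sum>s\<in>G. r' s * s)"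
    unfolding gen_ideal_def by blast
  define c where "c s = (if s \<in> F then r s else 0) + (if s \<in> G then r' s else 0)" for s
  have "x = (\<Sum>s\<in>F \<union> G. (if s \<in> F then r s else 0) * s)"
    unfolding F(4) using F(1) G(1) by (intro sum.mono_neutral_cong_left) auto
  moreover have "y = (\<Sum>s\<in>F \<union> G. (if s \<in> G then r' s else 0) * s)"
    unfolding G(4) using F(1) G(1) by (intro sum.mono_neutral_cong_left) auto
  ultimately have "x + y = (\<Sum>s\<in>F \<union> G. c s * s)"
    unfolding c_def by (simp add: sum.distrib distrib_right)
  moreover have "\<forall>s\<in>F \<union> G. c s \<in> A"
    using F G A unfolding c_def by (auto intro!: subring_add subring_0)
  ultimately show "x + y \<in> gen_ideal A S"
    unfolding gen_ideal_def using F G by (intro CollectI exI[of _ "F \<union> G"] exI[of _ c]) auto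
next
  fix a x assume a: "a \<in> A" and "x \<in> gen_ideal A S"
  then obtain F r where F: "finite F" "F \<subseteq> S" "\<forall>s\<in>F. r s \<in> A" "x = (\<Sum>s\<in>F. r s * s)"
    unfolding gen_ideal_def by blast
  have "a * x = (\<Sum>s\<in>F. (a * r s) * s)"
    by (simp add: F(4) sum_distrib_left mult.assoc)
  then show "a * x \<in> gen_ideal A S"
    unfolding gen_ideal_def using F a A by (intro CollectI exI[of _ F] exI[of _ "\<lambda>s. a * r s"])
      (auto intro: subring_mult)
qed

lemma ideal_subset_radical: "is_ideal_in A I \<Longrightarrow> I \<subseteq> radical_in A I"
  unfolding radical_in_def using ideal_subset by (fastforce intro: exI[of _ 1])

lemma radical_radical: "radical_in A (radical_in A I) \<subseteq> radical_in A I"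
  unfolding radical_in_def by (auto simp: power_mult[symmetric] intro: exI[of _ "_ * _"])

lemma radical_mono: "A \<subseteq> B \<Longrightarrow> I \<subseteq> I' \<Longrightarrow> radical_in A I \<subseteq> radical_in B I'"
  unfolding radical_in_def by blast

lemma radical_ideal:
  assumes A: "subring A" and I: "is_ideal_in A I"
  shows "is_ideal_in A (radical_in A I)"
  unfolding is_ideal_in_def
proof (intro conjI ballI)
  show "radical_in A I \<subseteq> A"
    by (auto simp: radical_in_def)
  show "0 \<in> radical_in A I"
    using subring_0[OF A] ideal_0[OF I] by (auto simp: radical_in_def intro!: exI[of _ 1])
next
  fix x y assume "x \<in> radical_in A I" "y \<in> radical_in A I"
  then obtain a b where x: "x \<in> A" "a > 0" "x ^ a \<in> I" and y: "y \<in> A" "b > 0" "y ^ b \<in> I"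
    unfolding radical_in_def by blast
  have "of_nat ((a + b) choose k) * x ^ k * y ^ (a + b - k) \<in> I" for k
  proof (cases "a \<le> k")
    case True
    then have "x ^ k = x ^ a * x ^ (k - a)"
      by (simp add: power_add[symmetric])
    then have eq: "of_nat ((a + b) choose k) * x ^ k * y ^ (a + b - k)
        = (of_nat ((a + b) choose k) * x ^ (k - a) * y ^ (a + b - k)) * x ^ a"
      by (simp add: ac_simps)
    show ?thesis
      unfolding eq by (rule ideal_mult_left[OF I _ x(3)]) (intro subring_mult subring_of_nat subring_power A x y)
  next
    case False
    then have "y ^ (a + b - k) = y ^ b * y ^ (a - k)"
      by (simp add: power_add[symmetric] add.commute)
    then have eq: "of_nat ((a + b) choose k) * x ^ k * y ^ (a + b - k)
        = (of_nat ((a + b) choose k) * x ^ k * y ^ (a - k)) * y ^ b"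
      by (simp add: ac_simps)
    show ?thesis
      unfolding eq by (rule ideal_mult_left[OF I _ y(3)]) (intro subring_mult subring_of_nat subring_power A x y)
  qed
  then have "(x + y) ^ (a + b) \<in> I"
    unfolding binomial_ring by (rule ideal_sum[OF I])
  then show "x + y \<in> radical_in A I"
    using x y A unfolding radical_in_def by (auto intro: subring_add)
next
  fix r x assume r: "r \<in> A" and "x \<in> radical_in A I"
  then obtain a where x: "x \<in> A" "a > 0" "x ^ a \<in> I"
    unfolding radical_in_def by blast
  then have "(r * x) ^ a \<in> I"
    using A I r by (auto simp: power_mult_distrib intro: ideal_mult_left subring_power)
  then show "r * x \<in> radical_in A I"
    unfolding radical_in_def using x r A by (auto intro: subring_mult)
qed

lemma radical_gen_ideal_subset:
  assumes B: "subring B" and I: "is_ideal_in B I" and "A \<subseteq> B" "S \<subseteq> radical_in B I"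
  shows "radical_in A (gen_ideal A S) \<subseteq> radical_in B I"
proof -
  have "gen_ideal A S \<subseteq> radical_in B I"
    using gen_ideal_mono[OF \<open>A \<subseteq> B\<close> order_refl] gen_ideal_least[OF radical_ideal[OF B I] assms(4)]
    by (rule order_trans)
  then have "radical_in A (gen_ideal A S) \<subseteq> radical_in B (radical_in B I)"
    using \<open>A \<subseteq> B\<close> by (rule radical_mono[rotated])
  then show ?thesis
    using radical_radical by (rule order_trans)
qed

lemma power_mem_ideal_power_in: "subring A \<Longrightarrow> x \<in> I \<Longrightarrow> x ^ p \<in> ideal_power_in A I p"
  unfolding ideal_power_in_def
  by (rule subsetD[OF gen_ideal_superset]) (auto intro!: exI[of _ "replicate p x"])

section \<open>Differential polynomials of bounded order\<close>

lemma Rh_mono: "h \<le> h' \<Longrightarrow> Rh h \<subseteq> Rh h'"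
  unfolding Rh_def by fastforce

lemma Rh_const: "Poly_Mapping.single 0 c \<in> Rh h"
  by (simp add: Rh_def)

lemma Rh_subring: "subring (Rh h :: ('k::field, 'm::finite, 'n) dpoly set)"
  unfolding subring_def
proof (intro conjI ballI)
  show "0 \<in> Rh h" "1 \<in> Rh h"
    by (auto simp: Rh_def)
  fix x y :: "('k, 'm, 'n) dpoly" assume x: "x \<in> Rh h" and y: "y \<in> Rh h"
  show "x + y \<in> Rh h"
    using x y keys_add[of x y] by (auto simp: Rh_def)
  show "x * y \<in> Rh h"
    using x y keys_mult[of x y] by (fastforce simp: Rh_def keys_add_nat)
  show "- x \<in> Rh h"
    using x by (simp add: Rh_def)
qed

lemma ord_op_dshift: "ord_op (fst (dshift j v)) = Suc (ord_op (fst v))"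
proof -
  have "(fst v)(j := fst v j + 1) = (\<lambda>i. fst v i + (if i = j then 1 else 0))"
    by auto
  then show ?thesis
    unfolding ord_op_def dshift_def by (simp add: sum.distrib)
qed

lemma keys_dshift_monom: "Poly_Mapping.keys (dshift_monom j mon v) \<subseteq> insert (dshift j v) (Poly_Mapping.keys mon)"
  by (auto simp: in_keys_iff lookup_add lookup_minus lookup_single when_def split: if_splits)

lemma keys_dderiv_term:
  "Poly_Mapping.keys (dderiv_term D j mon c) \<subseteq> insert mon (dshift_monom j mon ` Poly_Mapping.keys mon)"
proof -
  let ?t = "\<lambda>v. Poly_Mapping.single (dshift_monom j mon v) (of_nat (Poly_Mapping.lookup mon v) * c)"
  have "Poly_Mapping.keys (sum ?t (Poly_Mapping.keys mon)) \<subseteq> (\<Union>v\<in>Poly_Mapping.keys mon. Poly_Mapping.keys (?t v))"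
    by (rule keys_sum)
  also have "\<dots> \<subseteq> dshift_monom j mon ` Poly_Mapping.keys mon"
    by auto
  finally have "Poly_Mapping.keys (sum ?t (Poly_Mapping.keys mon)) \<subseteq> dshift_monom j mon ` Poly_Mapping.keys mon" .
  moreover have "Poly_Mapping.keys (Poly_Mapping.single mon (D j c)) \<subseteq> {mon}"
    by simp
  ultimately show ?thesis
    unfolding dderiv_term_def
    using keys_add[of "Poly_Mapping.single mon (D j c)" "sum ?t (Poly_Mapping.keys mon)"] by blast
qed

lemma dderiv_Rh:
  assumes "p \<in> Rh h"
  shows "dderiv D j p \<in> Rh (Suc h)"
  unfolding Rh_def
proof (intro CollectI ballI)
  fix mon' u
  assume mon': "mon' \<in> Poly_Mapping.keys (dderiv D j p)" and u: "u \<in> Poly_Mapping.keys mon'"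
  from mon' have "mon' \<in> (\<Union>mon\<in>Poly_Mapping.keys p. Poly_Mapping.keys (dderiv_term D j mon (Poly_Mapping.lookup p mon)))"
    unfolding dderiv_eq_sum_dderiv_term by (rule subsetD[OF keys_sum])
  then obtain mon where mon: "mon \<in> Poly_Mapping.keys p"
    and "mon' \<in> Poly_Mapping.keys (dderiv_term D j mon (Poly_Mapping.lookup p mon))"
    by (rule UN_E)
  from this(2) have "mon' \<in> insert mon (dshift_monom j mon ` Poly_Mapping.keys mon)"
    by (rule subsetD[OF keys_dderiv_term])
  then have "u \<in> Poly_Mapping.keys mon \<or> (\<exists>v\<in>Poly_Mapping.keys mon. u = dshift j v)"
  proof
    assume "mon' \<in> dshift_monom j mon ` Poly_Mapping.keys mon"
    then obtain v where "v \<in> Poly_Mapping.keys mon" "mon' = dshift_monom j mon v"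
      by (rule imageE)
    then show ?thesis
      using u keys_dshift_monom[where j = j and mon = mon and v = v] by auto
  qed (use u in simp)
  moreover have "\<forall>v\<in>Poly_Mapping.keys mon. ord_op (fst v) \<le> h"
    using assms mon by (simp add: Rh_def)
  ultimately show "ord_op (fst u) \<le> Suc h"
    by (auto simp: ord_op_dshift)
qed

lemma dapply_Rh: "p \<in> Rh h \<Longrightarrow> dapply D js p \<in> Rh (h + length js)"
  by (induction js rule: rev_induct) (auto simp: dapply_snoc intro: dderiv_Rh)

lemma dapply_Rh_le: "f \<in> Rh l \<Longrightarrow> l + length js \<le> h \<Longrightarrow> dapply D js f \<in> Rh h"
  using dapply_Rh Rh_mono by blast

lemma ideal_Rh_of_nat_mult_cancel:
  fixes x :: "('k::field_char_0, 'm::finite, 'n) dpoly"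
  assumes "is_ideal_in (Rh h) P" "N > 0" "of_nat N * x \<in> P"
  shows "x \<in> P"
proof -
  have "Poly_Mapping.single 0 (inverse (of_nat N)) * (of_nat N * x) = x"
    using assms(2) by (simp flip: single_of_nat add: mult.assoc[symmetric] mult_single)
  then show ?thesis
    using ideal_mult_left[OF assms(1) Rh_const[where c = "inverse (of_nat N)"] assms(3)] by simp
qed

definition derivatives_upto :: "('m \<Rightarrow> 'k::field \<Rightarrow> 'k) \<Rightarrow> ('k, 'm::finite, 'n) dpoly set \<Rightarrow> nat
    \<Rightarrow> ('k, 'm, 'n) dpoly set" where
  "derivatives_upto D J t = {dapply D js g | js g. g \<in> J \<and> length js \<le> t}"

lemma prolong_eq_gen_ideal: "prolong D l J t = gen_ideal (Rh (l + t)) (derivatives_upto D J t)"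
  by (simp add: prolong_def derivatives_upto_def)

lemma derivatives_upto_Rh:
  assumes "J \<subseteq> Rh l"
  shows "derivatives_upto D J t \<subseteq> Rh (l + t)"
proof
  fix x assume "x \<in> derivatives_upto D J t"
  then obtain js g where "x = dapply D js g" "g \<in> J" "length js \<le> t"
    unfolding derivatives_upto_def by blast
  then show "x \<in> Rh (l + t)"
    using assms dapply_Rh[of g l D js] Rh_mono[of "l + length js" "l + t"] by auto
qed

lemma prolong_ideal: "J \<subseteq> Rh l \<Longrightarrow> is_ideal_in (Rh (l + t)) (prolong D l J t)"
  unfolding prolong_eq_gen_ideal by (intro gen_ideal_ideal Rh_subring derivatives_upto_Rh)

lemma prolong_mono: "t \<le> t' \<Longrightarrow> prolong D l J t \<subseteq> prolong D l J t'"
  unfolding prolong_eq_gen_ideal derivatives_upto_def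
  by (intro gen_ideal_mono Rh_mono) (auto intro: order_trans)

lemma derivatives_upto_subset_prolong: "derivatives_upto D J t \<subseteq> prolong D l J t"
  unfolding prolong_eq_gen_ideal by (rule gen_ideal_superset[OF Rh_subring])

lemma dderiv_prolong:
  assumes D: "diff_field D" and J: "J \<subseteq> Rh l" and x: "x \<in> prolong D l J t"
  shows "dderiv D j x \<in> prolong D l J (Suc t)"
proof -
  have I: "is_ideal_in (Rh (l + Suc t)) (prolong D l J (Suc t))"
    by (rule prolong_ideal[OF J])
  from x obtain F r where F: "finite F" "F \<subseteq> derivatives_upto D J t" "\<forall>s\<in>F. r s \<in> Rh (l + t)"
    and x_eq: "x = (\<Sum>s\<in>F. r s * s)"
    unfolding prolong_eq_gen_ideal gen_ideal_def by blast
  have "dderiv D j (r s) * s + r s * dderiv D j s \<in> prolong D l J (Suc t)" if s: "s \<in> F" for s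
  proof -
    obtain js g where g: "s = dapply D js g" "g \<in> J" "length js \<le> t"
      using s F(2) unfolding derivatives_upto_def by blast
    have "s \<in> prolong D l J (Suc t)"
      using s F(2) prolong_mono[of t "Suc t" D l J] derivatives_upto_subset_prolong[of D J t l] by auto
    moreover have "dderiv D j s \<in> prolong D l J (Suc t)"
      using g derivatives_upto_subset_prolong unfolding derivatives_upto_def
      by (force simp: dapply_snoc[symmetric])
    moreover have "r s \<in> Rh (l + Suc t)" "dderiv D j (r s) \<in> Rh (l + Suc t)"
      using s F(3) Rh_mono[of "l + t" "l + Suc t"] dderiv_Rh[of "r s" "l + t"] by auto
    ultimately show ?thesis
      by (intro ideal_add[OF I] ideal_mult_left[OF I])
  qed
  then show ?thesis
    unfolding x_eq by (simp add: dderiv_sum[OF D] dderiv_mult[OF D] ideal_sum[OF I])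
qed

lemma dapply_prolong:
  assumes "diff_field D" "J \<subseteq> Rh l" "x \<in> prolong D l J t"
  shows "dapply D js x \<in> prolong D l J (t + length js)"
  by (induction js rule: rev_induct) (use assms in \<open>auto simp: dapply_snoc intro: dderiv_prolong\<close>)

section \<open>Derivatives of a power\<close>

lemma mset_concat_replicate: "mset (concat (replicate p ts)) = (\<Sum>i<p. mset ts)"
  by (induction p) auto

lemma mset_colour_classes:
  "length cs = length js \<Longrightarrow> set cs \<subseteq> {..<q} \<Longrightarrow> (\<Sum>i<q. mset (colour_class js cs i)) = mset js"
proof (induction cs js rule: list_induct2)
  case (Cons c cs j js)
  have "(\<Sum>i<q. mset (colour_class (j # js) (c # cs) i))
      = (\<Sum>i<q. mset (colour_class js cs i) + (if c = i then {#j#} else {#}))"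
    by (intro sum.cong) (auto simp: colour_class_Cons)
  then show ?case
    using Cons by (simp add: sum.distrib)
qed simp

definition balanced_colourings :: "'a list \<Rightarrow> nat \<Rightarrow> 'a list \<Rightarrow> nat list set" where
  "balanced_colourings js q ts =
     {cs \<in> colourings (length js) q. \<forall>i<q. mset (colour_class js cs i) = mset ts}"

lemma colour_class_replicate: "colour_class ts (replicate (length ts) c) i = (if c = i then ts else [])"
  by (induction ts) (auto simp: colour_class_Cons)

lemma block_colouring_balanced:
  "concat (map (\<lambda>i. replicate (length ts) i) [0..<p]) \<in> balanced_colourings (concat (replicate p ts)) p ts"
proof -
  have "colour_class (concat (replicate p ts)) (concat (map (\<lambda>i. replicate (length ts) i) [0..<p])) i
      = (if i < p then ts else [])" for i
  proof (induction p)
    case (Suc p)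
    have "length (concat (replicate p ts)) = length (concat (map (\<lambda>i. replicate (length ts) i) [0..<p]))"
      by (simp add: length_concat o_def sum_list_replicate map_replicate_const)
    then show ?case
      using Suc by (simp add: replicate_append_same[symmetric] colour_class_append colour_class_replicate)
  qed simp
  then show ?thesis
    by (auto simp: balanced_colourings_def colourings_def length_concat o_def sum_list_replicate
        map_replicate_const)
qed

lemma dapply_power_eq:
  fixes f :: "('k::field, 'm, 'n) dpoly" and ts :: "'m list" and p :: nat
  assumes "diff_field D"
  defines "js \<equiv> concat (replicate p ts)"
  defines "B \<equiv> balanced_colourings js p ts"
  shows "dapply D js (f ^ p) = of_nat (card B) * dapply D ts f ^ p
    + (\<Sum>cs\<in>colourings (length js) p - B. \<Prod>i<p. dapply D (colour_class js cs i) f)"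
proof -
  have B: "B \<subseteq> colourings (length js) p"
    by (auto simp: B_def balanced_colourings_def)
  have "(\<Prod>i<p. dapply D (colour_class js cs i) f) = (\<Prod>i<p. dapply D ts f)" if "cs \<in> B" for cs
    using that unfolding B_def balanced_colourings_def
    by (intro prod.cong refl dapply_mset_cong[OF assms(1)]) auto
  then have "(\<Sum>cs\<in>B. \<Prod>i<p. dapply D (colour_class js cs i) f) = of_nat (card B) * dapply D ts f ^ p"
    by simp
  moreover have "dapply D js (f ^ p) = (\<Sum>cs\<in>colourings (length js) p. \<Prod>i<p. dapply D (colour_class js cs i) f)"
    using dapply_prod[OF assms(1), where js = js and q = p and F = "\<lambda>_. f"] by simp
  ultimately show ?thesis
    using sum.subset_diff[OF B finite_colourings, of "\<lambda>cs. \<Prod>i<p. dapply D (colour_class js cs i) f"]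
    by simp
qed

lemma image_mset_sum: "image_mset f (\<Sum>i\<in>A. M i) = (\<Sum>i\<in>A. image_mset f (M i))"
  by (induction A rule: infinite_finite_induct) auto

lemma sum_mset_eq_sum_const_imp_eq:
  fixes N :: "nat \<Rightarrow> 'a multiset" and key :: "'a \<Rightarrow> 'b::linorder"
  assumes "inj key" and sum: "(\<Sum>i<p. N i) = (\<Sum>i<p. M)"
    and size: "\<And>i. i < p \<Longrightarrow> size M \<le> size (N i)"
    and key_le: "\<And>i. i < p \<Longrightarrow> size (N i) = size M \<Longrightarrow> image_mset key M \<le> image_mset key (N i)"
    and i: "i < p"
  shows "N i = M"
proof -
  have "(\<Sum>i<p. size M) = (\<Sum>i<p. size (N i))"
    using arg_cong[OF sum, of size] unfolding size_multiset_sum by (rule sym)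
  then have sizes: "size M = size (N i)" if "i < p" for i
    by (rule sum_mono_inv) (use size that in auto)
  have "(\<Sum>i<p. image_mset key M) = (\<Sum>i<p. image_mset key (N i))"
    using arg_cong[OF sum, of "image_mset key"] unfolding image_mset_sum by (rule sym)
  then have "image_mset key M = image_mset key (N i)"
    by (rule sum_mono_inv) (use key_le sizes i in auto)
  then show ?thesis
    using multiset.inj_map[OF assms(1)] by (simp add: inj_eq)
qed

lemma unbalanced_colouring_has_smaller_class:
  fixes key :: "'a \<Rightarrow> 'b::linorder" and ts :: "'a list" and p :: nat
  defines "js \<equiv> concat (replicate p ts)"
  assumes "inj key" and cs: "cs \<in> colourings (length js) p - balanced_colourings js p ts"
  obtains i where "i < p" "length (colour_class js cs i) < length ts \<or>
      length (colour_class js cs i) = length ts \<and>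
      image_mset key (mset (colour_class js cs i)) < image_mset key (mset ts)"
proof -
  let ?C = "\<lambda>i. mset (colour_class js cs i)"
  have "?C i = mset ts" if "i < p" and no_smaller: "\<And>i. i < p \<Longrightarrow> length (colour_class js cs i) \<ge> length ts \<and>
      (length (colour_class js cs i) = length ts \<longrightarrow> image_mset key (mset ts) \<le> image_mset key (?C i))" for i
  proof (rule sum_mset_eq_sum_const_imp_eq[OF assms(2) _ _ _ \<open>i < p\<close>])
    show "(\<Sum>i<p. ?C i) = (\<Sum>i<p. mset ts)"
      using cs unfolding js_def by (simp add: colourings_def mset_colour_classes mset_concat_replicate)
  qed (use no_smaller in auto)
  then show thesis
    using that cs by (force simp: balanced_colourings_def not_less)
qed

lemma dapply_power_mem_ideal:
  fixes D :: "'m::finite \<Rightarrow> 'k::field_char_0 \<Rightarrow> 'k" and f :: "('k, 'm, 'n) dpoly"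
    and ts :: "'m list" and p :: nat
  defines "js \<equiv> concat (replicate p ts)"
  assumes D: "diff_field D" and P: "is_ideal_in (Rh h) P"
    and Rh: "\<And>us. length us \<le> length js \<Longrightarrow> dapply D us f \<in> Rh h"
    and power: "dapply D js (f ^ p) \<in> P"
    and unbalanced: "\<And>cs. cs \<in> colourings (length js) p - balanced_colourings js p ts \<Longrightarrow>
      \<exists>i<p. dapply D (colour_class js cs i) f \<in> P"
  shows "dapply D ts f ^ p \<in> P"
proof -
  let ?B = "balanced_colourings js p ts"
  have "(\<Prod>i<p. dapply D (colour_class js cs i) f) \<in> P" if cs: "cs \<in> colourings (length js) p - ?B" for cs
  proof -
    obtain i where "i < p" "dapply D (colour_class js cs i) f \<in> P"
      using unbalanced[OF cs] by blast
    then show ?thesis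
      using Rh length_colour_class_le by (intro ideal_prod[OF Rh_subring P]) auto
  qed
  then have "(\<Sum>cs\<in>colourings (length js) p - ?B. \<Prod>i<p. dapply D (colour_class js cs i) f) \<in> P"
    by (rule ideal_sum[OF P])
  then have "dapply D js (f ^ p) - of_nat (card ?B) * dapply D ts f ^ p \<in> P"
    unfolding dapply_power_eq[OF D, of p ts f, folded js_def] by simp
  from ideal_diff[OF Rh_subring P power this]
  have "of_nat (card ?B) * dapply D ts f ^ p \<in> P"
    by simp
  moreover have "card ?B > 0"
  proof -
    have "?B \<noteq> {}"
      using block_colouring_balanced[of ts p] unfolding js_def by blast
    moreover have "finite ?B"
      by (rule finite_subset[OF _ finite_colourings]) (auto simp: balanced_colourings_def)
    ultimately show ?thesis
      by (simp add: card_gt_0_iff)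
  qed
  ultimately show ?thesis
    using ideal_Rh_of_nat_mult_cancel[OF P] by blast
qed

text \<open>Induction along a linear order of the operators of order \<open>k\<close> that is compatible with
  composition: the multiset order on their directions, numbered by an injection into \<open>nat\<close>.\<close>

lemma dapply_mem_radical_ideal:
  fixes D :: "'m::finite \<Rightarrow> 'k::field_char_0 \<Rightarrow> 'k" and f :: "('k, 'm, 'n) dpoly"
  assumes D: "diff_field D" and "p > 0"
    and P: "is_ideal_in (Rh h) P" "radical_in (Rh h) P \<subseteq> P"
    and f: "f \<in> Rh l" "l + k * p \<le> h"
    and power: "\<And>js. length js = k * p \<Longrightarrow> dapply D js (f ^ p) \<in> P"
    and shorter: "\<And>us. length us < k \<Longrightarrow> dapply D us f \<in> P"
    and "length ts = k"
  shows "dapply D ts f \<in> P"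
proof -
  have "k \<le> k * p"
    using \<open>p > 0\<close> by simp
  with f(2) have "l + k \<le> h"
    by linarith
  obtain key :: "'m \<Rightarrow> nat" where key: "inj key"
    using finite_imp_inj_to_nat_seg[OF finite_UNIV] by blast
  show ?thesis
    using \<open>length ts = k\<close>
  proof (induction "image_mset key (mset ts)" arbitrary: ts rule: less_induct)
    case less
    let ?js = "concat (replicate p ts)"
    have js: "length ?js = k * p"
      using less.prems by (simp add: length_concat o_def sum_list_replicate)
    have "dapply D ts f ^ p \<in> P"
    proof (rule dapply_power_mem_ideal[OF D P(1)])
      show "dapply D us f \<in> Rh h" if "length us \<le> length ?js" for us
        using that js f by (intro dapply_Rh_le) auto
      show "dapply D ?js (f ^ p) \<in> P"
        using power[OF js] .
      show "\<exists>i<p. dapply D (colour_class ?js cs i) f \<in> P"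
        if cs: "cs \<in> colourings (length ?js) p - balanced_colourings ?js p ts" for cs
      proof -
        obtain i where "i < p" and "length (colour_class ?js cs i) < k \<or>
            length (colour_class ?js cs i) = k \<and>
            image_mset key (mset (colour_class ?js cs i)) < image_mset key (mset ts)"
          using unbalanced_colouring_has_smaller_class[OF key cs] less.prems by metis
        then show ?thesis
          using shorter less.hyps by blast
      qed
    qed
    moreover have "dapply D ts f \<in> Rh h"
      using less.prems f(1) \<open>l + k \<le> h\<close> by (intro dapply_Rh_le) auto
    ultimately show ?case
      using P(2) \<open>p > 0\<close> unfolding radical_in_def by blast
  qed
qed

lemma dapply_mem_radical_prolong:
  fixes D :: "'m::finite \<Rightarrow> 'k::field_char_0 \<Rightarrow> 'k" and J :: "('k, 'm, 'n) dpoly set"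
  assumes D: "diff_field D" and J: "J \<subseteq> Rh l" and "p > 0"
    and f: "f \<in> Rh l" "f ^ p \<in> prolong D l J 1"
    and "length ts \<le> k"
  shows "dapply D ts f \<in> radical_in (Rh (l + (k * p + 1))) (prolong D l J (k * p + 1))"
  using \<open>length ts \<le> k\<close>
proof (induction k arbitrary: ts rule: less_induct)
  case (less k)
  let ?P = "\<lambda>k. radical_in (Rh (l + (k * p + 1))) (prolong D l J (k * p + 1))"
  have shorter: "dapply D us f \<in> ?P k" if "length us < k" for us
  proof -
    have "length us * p \<le> k * p"
      using that by simp
    then have "?P (length us) \<subseteq> ?P k"
      by (intro radical_mono Rh_mono prolong_mono) auto
    then show ?thesis
      using less.IH[OF that order_refl] by blast
  qed
  have power: "dapply D js (f ^ p) \<in> ?P k" if "length js = k * p" for js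
  proof -
    have "dapply D js (f ^ p) \<in> prolong D l J (k * p + 1)"
      using dapply_prolong[OF D J f(2), of js] that by (simp add: add.commute)
    then show ?thesis
      using ideal_subset_radical[OF prolong_ideal[OF J]] by blast
  qed
  show ?case
  proof (cases "length ts < k")
    case False
    with less.prems have "length ts = k"
      by simp
    show ?thesis
      by (rule dapply_mem_radical_ideal[OF D \<open>p > 0\<close> radical_ideal[OF Rh_subring prolong_ideal[OF J]]
            radical_radical f(1) _ power shorter \<open>length ts = k\<close>]) simp
  qed (rule shorter)
qed

theorem lemma3p1:
  fixes D :: "'m::finite \<Rightarrow> 'k::field_char_0 \<Rightarrow> 'k"
    and J :: "('k, 'm, 'n::finite) dpoly set"
    and l p :: nat
  assumes "diff_field D"
    and "is_ideal_in (Rh l) J"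
    and "p > 0"
    and "ideal_power_in (Rh l) (dprime D l J) p \<subseteq> prolong D l J 1"
  shows "\<forall>k::nat. radical_in (Rh (l + k)) (prolong D l (dprime D l J) k)
                   \<subseteq> radical_in (Rh (l + k * p + 1)) (prolong D l J (k * p + 1))"
proof
  fix k :: nat
  have J: "J \<subseteq> Rh l"
    using assms(2) by (rule ideal_subset)
  have "f \<in> Rh l" "f ^ p \<in> prolong D l J 1" if "f \<in> dprime D l J" for f
    using that power_mem_ideal_power_in[OF Rh_subring that, of p] assms(4) by (auto simp: dprime_def)
  then have "derivatives_upto D (dprime D l J) k \<subseteq> radical_in (Rh (l + (k * p + 1))) (prolong D l J (k * p + 1))"
    unfolding derivatives_upto_def using dapply_mem_radical_prolong[OF assms(1) J assms(3)] by blast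
  moreover have "k \<le> k * p"
    using assms(3) by simp
  then have "l + k \<le> l + (k * p + 1)"
    by linarith
  ultimately have "radical_in (Rh (l + k)) (prolong D l (dprime D l J) k)
      \<subseteq> radical_in (Rh (l + (k * p + 1))) (prolong D l J (k * p + 1))"
    unfolding prolong_eq_gen_ideal[of D l "dprime D l J"]
    by (intro radical_gen_ideal_subset Rh_subring prolong_ideal[OF J] Rh_mono)
  then show "radical_in (Rh (l + k)) (prolong D l (dprime D l J) k)
      \<subseteq> radical_in (Rh (l + k * p + 1)) (prolong D l J (k * p + 1))"
    by (simp add: add.assoc)
qed

end
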